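(* For every $\varkappa>0$, the function $\lambda\mapsto\partial_\lambda p(\lambda,\varkappa)$ has exactly one zero $\lambda_0$ in the open interval $(-2K,0)$, and at this zero $\partial_\lambda^2p(\lambda_0,\varkappa)<0$.
   Context: Fix real $J_1<J_2<J_3$; $\rho=\tfrac12\sqrt{J_3-J_1}$, $k=\sqrt{(J_2-J_1)/(J_3-J_1)}\in(0,1)$, $K=K(k)$ the complete elliptic integral of the first kind. $w_1(\lambda)=\rho/\mathrm{sn}(\lambda,k)$, $w_2(\lambda)=\rho\,\mathrm{dn}(\lambda,k)/\mathrm{sn}(\lambda,k)$, $w_3(\lambda)=\rho\,\mathrm{cn}(\lambda,k)/\mathrm{sn}(\lambda,k)$ (Jacobi elliptic functions of modulus $k$). For real $\lambda\in(-2K,0)$ and $\varkappa>0$, $p(\lambda,\varkappa)=\varkappa w_3(\lambda)-2w_1(\lambda)w_2(\lambda)$. *)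

theory Defs
  imports "HOL-Analysis.Analysis"
begin

text \<open>Jacobi elliptic functions of modulus k (0 < k < 1), defined classically via the
amplitude: the incomplete elliptic integral of the first kind
F(phi,k) = int_0^phi dtheta / sqrt(1 - k^2 sin^2 theta) (signed),
am(., k) its inverse, sn = sin o am, cn = cos o am, dn = sqrt(1 - k^2 sn^2).\<close>

definition ellF :: "real \<Rightarrow> real \<Rightarrow> real" where
  "ellF k \<phi> =
     (if 0 \<le> \<phi> then integral {0..\<phi>} (\<lambda>\<theta>. 1 / sqrt (1 - k\<^sup>2 * (sin \<theta>)\<^sup>2))
      else - integral {\<phi>..0} (\<lambda>\<theta>. 1 / sqrt (1 - k\<^sup>2 * (sin \<theta>)\<^sup>2)))"

definition ellK :: "real \<Rightarrow> real" where
  "ellK k = ellF k (pi / 2)"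

definition jam :: "real \<Rightarrow> real \<Rightarrow> real" where
  "jam k u = (THE \<phi>. ellF k \<phi> = u)"

definition jsn :: "real \<Rightarrow> real \<Rightarrow> real" where
  "jsn k u = sin (jam k u)"

definition jcn :: "real \<Rightarrow> real \<Rightarrow> real" where
  "jcn k u = cos (jam k u)"

definition jdn :: "real \<Rightarrow> real \<Rightarrow> real" where
  "jdn k u = sqrt (1 - k\<^sup>2 * (jsn k u)\<^sup>2)"

definition rho :: "real \<Rightarrow> real \<Rightarrow> real \<Rightarrow> real" where
  "rho J1 J2 J3 = sqrt (J3 - J1) / 2"

definition modk :: "real \<Rightarrow> real \<Rightarrow> real \<Rightarrow> real" where
  "modk J1 J2 J3 = sqrt ((J2 - J1) / (J3 - J1))"

definition w1 :: "real \<Rightarrow> real \<Rightarrow> real \<Rightarrow> real \<Rightarrow> real" where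
  "w1 J1 J2 J3 l = rho J1 J2 J3 / jsn (modk J1 J2 J3) l"

definition w2 :: "real \<Rightarrow> real \<Rightarrow> real \<Rightarrow> real \<Rightarrow> real" where
  "w2 J1 J2 J3 l = rho J1 J2 J3 * jdn (modk J1 J2 J3) l / jsn (modk J1 J2 J3) l"

definition w3 :: "real \<Rightarrow> real \<Rightarrow> real \<Rightarrow> real \<Rightarrow> real" where
  "w3 J1 J2 J3 l = rho J1 J2 J3 * jcn (modk J1 J2 J3) l / jsn (modk J1 J2 J3) l"

definition pfun :: "real \<Rightarrow> real \<Rightarrow> real \<Rightarrow> real \<Rightarrow> real \<Rightarrow> real" where
  "pfun J1 J2 J3 l \<kappa> = \<kappa> * w3 J1 J2 J3 l - 2 * w1 J1 J2 J3 l * w2 J1 J2 J3 l"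

end

theory Submission
  imports Defs
begin

text \<open>In the amplitude variable \<open>\<phi> = am \<lambda> \<in> (-\<pi>, 0)\<close>, where \<open>d\<phi>/d\<lambda> = \<Delta>(\<phi>)\<close>, one has
  \<open>\<partial>\<^sub>\<lambda> p = B(\<phi>) / sin\<^sup>3 \<phi>\<close> with
  \<open>B(\<phi>) = 2\<rho>\<^sup>2 cos \<phi> (2 - k\<^sup>2 sin\<^sup>2 \<phi>) - \<kappa> \<rho> \<Delta>(\<phi>) sin \<phi>\<close>, \<open>\<Delta>(\<phi>) = sqrt (1 - k\<^sup>2 sin\<^sup>2 \<phi>)\<close>.
  Where \<open>cos \<phi> \<ge> 0\<close> both terms make \<open>B\<close> positive. Where \<open>cos \<phi> < 0\<close>,
  \<open>B = \<rho> cos \<phi> (2 - k\<^sup>2 sin\<^sup>2 \<phi>) (2\<rho> - G(\<phi>))\<close> with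
  \<open>G(\<phi>) = \<kappa> \<Delta>(\<phi>) sin \<phi> / (cos \<phi> (2 - k\<^sup>2 sin\<^sup>2 \<phi>))\<close> strictly increasing, so \<open>B\<close>
  has exactly one zero \<open>\<phi>\<^sub>0\<close>, at which \<open>B'(\<phi>\<^sub>0) = -\<rho> cos \<phi>\<^sub>0 (2 - k\<^sup>2 sin\<^sup>2 \<phi>\<^sub>0) G'(\<phi>\<^sub>0) > 0\<close>.
  Hence \<open>\<partial>\<^sub>\<lambda>\<^sup>2 p = B'(\<phi>\<^sub>0) \<Delta>(\<phi>\<^sub>0) / sin\<^sup>3 \<phi>\<^sub>0 < 0\<close>.\<close>

section \<open>The amplitude as inverse of the elliptic integral\<close>

definition ell_delta :: "real \<Rightarrow> real \<Rightarrow> real" where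
  "ell_delta k \<phi> = sqrt (1 - k\<^sup>2 * (sin \<phi>)\<^sup>2)"

lemma ell_delta_radicand_pos:
  fixes k \<phi> :: real assumes "k\<^sup>2 < 1" shows "1 - k\<^sup>2 * (sin \<phi>)\<^sup>2 > 0"
proof -
  have "(sin \<phi>)\<^sup>2 \<le> 1"
    by (simp add: abs_square_le_1)
  hence "k\<^sup>2 * (sin \<phi>)\<^sup>2 \<le> k\<^sup>2" by (simp add: mult_left_le)
  thus ?thesis using assms by linarith
qed

lemma ell_delta_pos: "k\<^sup>2 < 1 \<Longrightarrow> ell_delta k \<phi> > 0"
  unfolding ell_delta_def using ell_delta_radicand_pos[of k \<phi>] by simp

lemma ell_delta_le_1: "k\<^sup>2 < 1 \<Longrightarrow> ell_delta k \<phi> \<le> 1"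
  unfolding ell_delta_def by simp

lemma ell_delta_squared: "k\<^sup>2 < 1 \<Longrightarrow> (ell_delta k \<phi>)\<^sup>2 = 1 - k\<^sup>2 * (sin \<phi>)\<^sup>2"
  unfolding ell_delta_def using ell_delta_radicand_pos[of k \<phi>] by simp

lemma ell_delta_minus: "ell_delta k (-\<phi>) = ell_delta k \<phi>"
  unfolding ell_delta_def by simp

lemma ell_delta_pi_minus: "ell_delta k (pi - \<phi>) = ell_delta k \<phi>"
  unfolding ell_delta_def by simp

lemma has_real_derivative_ell_delta:
  assumes "k\<^sup>2 < 1"
  shows "(ell_delta k has_real_derivative - (k\<^sup>2 * sin \<phi> * cos \<phi>) / ell_delta k \<phi>) (at \<phi>)"
proof -
  have "((\<lambda>\<phi>. sqrt (1 - k\<^sup>2 * (sin \<phi>)\<^sup>2)) has_real_derivative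
     inverse (sqrt (1 - k\<^sup>2 * (sin \<phi>)\<^sup>2)) / 2 * (0 - k\<^sup>2 * (2 * sin \<phi> ^ 1 * cos \<phi>))) (at \<phi>)"
    by (rule derivative_eq_intros refl | use ell_delta_radicand_pos[OF assms, of \<phi>] in simp)+
  thus ?thesis unfolding ell_delta_def[abs_def] by (simp add: field_simps)
qed

lemma has_real_derivative_ell_delta_chain [derivative_intros]:
  fixes g :: "real \<Rightarrow> real"
  assumes "k\<^sup>2 < 1" "(g has_real_derivative g') (at x within S)"
  shows "((\<lambda>x. ell_delta k (g x)) has_real_derivative
           (- (k\<^sup>2 * sin (g x) * cos (g x)) / ell_delta k (g x)) * g') (at x within S)"
  using DERIV_chain2[OF has_real_derivative_ell_delta[OF assms(1)] assms(2)] .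

lemma isCont_ell_delta: "k\<^sup>2 < 1 \<Longrightarrow> isCont (ell_delta k) \<phi>"
  using has_real_derivative_ell_delta DERIV_isCont by blast

lemma continuous_on_inverse_ell_delta:
  assumes "k\<^sup>2 < 1" shows "continuous_on A (\<lambda>\<theta>. 1 / ell_delta k \<theta>)"
proof -
  have "ell_delta k \<theta> \<noteq> 0" for \<theta> using ell_delta_pos[OF assms, of \<theta>] by simp
  thus ?thesis using isCont_ell_delta[OF assms]
    by (intro continuous_at_imp_continuous_on ballI continuous_intros) auto
qed

lemma ellF_0: "ellF k 0 = 0"
  unfolding ellF_def by simp

lemma ellF_eq_integral_diff:
  assumes k: "k\<^sup>2 < 1" and a: "a \<le> 0" "a \<le> \<phi>"
  shows "ellF k \<phi> = integral {a..\<phi>} (\<lambda>\<theta>. 1 / ell_delta k \<theta>) - integral {a..0} (\<lambda>\<theta>. 1 / ell_delta k \<theta>)"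
proof -
  let ?f = "\<lambda>\<theta>. 1 / ell_delta k \<theta>"
  have f: "(\<lambda>\<theta>. 1 / sqrt (1 - k\<^sup>2 * (sin \<theta>)\<^sup>2)) = ?f"
    unfolding ell_delta_def ..
  have int: "?f integrable_on {c..d}" for c d
    by (rule integrable_continuous_real[OF continuous_on_inverse_ell_delta[OF k]])
  show ?thesis
  proof (cases "0 \<le> \<phi>")
    case True
    have "integral {a..0} ?f + integral {0..\<phi>} ?f = integral {a..\<phi>} ?f"
      by (rule Henstock_Kurzweil_Integration.integral_combine[OF a(1) True int])
    thus ?thesis using True unfolding ellF_def f by simp
  next
    case False
    have "integral {a..\<phi>} ?f + integral {\<phi>..0} ?f = integral {a..0} ?f"
      by (rule Henstock_Kurzweil_Integration.integral_combine[OF a(2) _ int]) (use False in simp)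
    thus ?thesis using False unfolding ellF_def f by simp
  qed
qed

lemma has_real_derivative_ellF:
  assumes k: "k\<^sup>2 < 1"
  shows "(ellF k has_real_derivative 1 / ell_delta k \<phi>) (at \<phi>)"
proof -
  let ?f = "\<lambda>\<theta>. 1 / ell_delta k \<theta>"
  define a where "a = - \<bar>\<phi>\<bar> - 1"
  define b where "b = \<bar>\<phi>\<bar> + 1"
  have ab: "a < \<phi>" "\<phi> < b" "a \<le> 0" unfolding a_def b_def by auto
  have "((\<lambda>u. integral {a..u} ?f) has_real_derivative ?f \<phi>) (at \<phi> within {a..b})"
    by (rule integral_has_real_derivative[OF continuous_on_inverse_ell_delta[OF k]]) (use ab in auto)
  hence "((\<lambda>u. integral {a..u} ?f - integral {a..0} ?f) has_real_derivative ?f \<phi>) (at \<phi>)"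
    using at_within_Icc_at[OF ab(1,2)] by (auto intro: derivative_eq_intros)
  thus ?thesis
    by (rule has_field_derivative_transform_within_open[of _ _ _ "{a<..<b}"])
       (use ab ellF_eq_integral_diff[OF k ab(3)] in auto)
qed

lemma has_real_derivative_ellF_chain [derivative_intros]:
  fixes g :: "real \<Rightarrow> real"
  assumes "k\<^sup>2 < 1" "(g has_real_derivative g') (at x within S)"
  shows "((\<lambda>x. ellF k (g x)) has_real_derivative (1 / ell_delta k (g x)) * g') (at x within S)"
  using DERIV_chain2[OF has_real_derivative_ellF[OF assms(1)] assms(2)] .

lemma ellF_diff_ge:
  assumes k: "k\<^sup>2 < 1" and "\<phi> \<le> \<psi>"
  shows "\<psi> - \<phi> \<le> ellF k \<psi> - ellF k \<phi>"
proof -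
  have "ellF k \<phi> - \<phi> \<le> ellF k \<psi> - \<psi>"
  proof (rule DERIV_nonneg_imp_nondecreasing[OF \<open>\<phi> \<le> \<psi>\<close>, of "\<lambda>t. ellF k t - t"])
    fix t
    have "((\<lambda>t. ellF k t - t) has_real_derivative 1 / ell_delta k t - 1) (at t)"
      by (intro DERIV_diff has_real_derivative_ellF[OF k] DERIV_ident)
    moreover have "1 / ell_delta k t - 1 \<ge> 0"
      using ell_delta_pos[OF k, of t] ell_delta_le_1[OF k, of t] by simp
    ultimately show "\<exists>y. DERIV (\<lambda>t. ellF k t - t) t :> y \<and> y \<ge> 0" by blast
  qed
  thus ?thesis by simp
qed

lemma ellF_less_iff: "k\<^sup>2 < 1 \<Longrightarrow> ellF k \<phi> < ellF k \<psi> \<longleftrightarrow> \<phi> < \<psi>"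
  using ellF_diff_ge[of k \<phi> \<psi>] ellF_diff_ge[of k \<psi> \<phi>] by (cases \<phi> \<psi> rule: linorder_cases) auto

lemma ellF_eq_iff: "k\<^sup>2 < 1 \<Longrightarrow> ellF k \<phi> = ellF k \<psi> \<longleftrightarrow> \<phi> = \<psi>"
  using ellF_less_iff[of k \<phi> \<psi>] ellF_less_iff[of k \<psi> \<phi>] by (cases \<phi> \<psi> rule: linorder_cases) auto

lemma ellF_minus:
  assumes k: "k\<^sup>2 < 1" shows "ellF k (-\<phi>) = - ellF k \<phi>"
proof -
  have "DERIV (\<lambda>t. ellF k (-t) + ellF k t) t :> 0" for t
    using DERIV_add[OF has_real_derivative_ellF_chain[OF k DERIV_minus[OF DERIV_ident]]
                       has_real_derivative_ellF[OF k]]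
    by (simp add: ell_delta_minus)
  from DERIV_isconst_all[OF allI[OF this], of \<phi> 0] show ?thesis by (simp add: ellF_0)
qed

lemma ellF_pi_minus:
  assumes k: "k\<^sup>2 < 1" shows "ellF k (pi - \<phi>) + ellF k \<phi> = ellF k pi"
proof -
  have "DERIV (\<lambda>t. ellF k (pi - t) + ellF k t) t :> 1 / ell_delta k (pi - t) * (0 - 1) + 1 / ell_delta k t" for t
    by (intro DERIV_add has_real_derivative_ellF_chain[OF k] has_real_derivative_ellF[OF k] derivative_intros)
  hence "DERIV (\<lambda>t. ellF k (pi - t) + ellF k t) t :> 0" for t
    by (simp add: ell_delta_pi_minus)
  from DERIV_isconst_all[OF allI[OF this], of \<phi> 0] show ?thesis by (simp add: ellF_0)
qed

lemma ellF_minus_pi: "k\<^sup>2 < 1 \<Longrightarrow> ellF k (-pi) = - 2 * ellK k"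
  using ellF_pi_minus[of k "pi/2"] ellF_minus[of k pi] unfolding ellK_def by simp

lemma ellF_surj:
  assumes k: "k\<^sup>2 < 1" shows "\<exists>\<phi>. ellF k \<phi> = u"
proof -
  have "ellF k (-\<bar>u\<bar>) \<le> u" "u \<le> ellF k \<bar>u\<bar>"
    using ellF_diff_ge[OF k, of "-\<bar>u\<bar>" 0] ellF_diff_ge[OF k, of 0 "\<bar>u\<bar>"] by (simp_all add: ellF_0)
  moreover have "isCont (ellF k) \<phi>" for \<phi>
    using has_real_derivative_ellF[OF k] DERIV_isCont by blast
  ultimately show ?thesis using IVT[of "ellF k" "-\<bar>u\<bar>" u "\<bar>u\<bar>"] by auto
qed

lemma ellF_jam: assumes k: "k\<^sup>2 < 1" shows "ellF k (jam k u) = u"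
proof -
  obtain \<phi> where \<phi>: "ellF k \<phi> = u" using ellF_surj[OF k] by blast
  have "ellF k (THE \<phi>. ellF k \<phi> = u) = u"
  proof (rule theI[of _ \<phi>])
    show "ellF k \<phi> = u" by fact
    show "\<psi> = \<phi>" if "ellF k \<psi> = u" for \<psi>
      using that \<phi> ellF_eq_iff[OF k, of \<psi> \<phi>] by simp
  qed
  thus ?thesis unfolding jam_def .
qed

lemma jam_ellF: assumes k: "k\<^sup>2 < 1" shows "jam k (ellF k \<phi>) = \<phi>"
  using ellF_jam[OF k, of "ellF k \<phi>"] ellF_eq_iff[OF k, of "jam k (ellF k \<phi>)" \<phi>] by simp

lemma jam_lipschitz:
  assumes k: "k\<^sup>2 < 1" shows "\<bar>jam k u - jam k v\<bar> \<le> \<bar>u - v\<bar>"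
proof (cases "jam k u \<le> jam k v")
  case True
  with ellF_diff_ge[OF k True] show ?thesis by (simp add: ellF_jam[OF k])
next
  case False
  hence "jam k v \<le> jam k u" by simp
  with ellF_diff_ge[OF k this] show ?thesis by (simp add: ellF_jam[OF k])
qed

lemma isCont_jam:
  assumes k: "k\<^sup>2 < 1" shows "isCont (jam k) u"
proof -
  have "lipschitz_on 1 UNIV (jam k)"
    by (rule lipschitz_onI) (use jam_lipschitz[OF k] in \<open>auto simp: dist_real_def\<close>)
  hence "continuous_on UNIV (jam k)" by (rule lipschitz_on_continuous_on)
  thus ?thesis by (simp add: continuous_on_eq_continuous_at)
qed

lemma has_real_derivative_jam:
  assumes k: "k\<^sup>2 < 1" shows "(jam k has_real_derivative ell_delta k (jam k u)) (at u)"
proof -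
  have "(jam k has_real_derivative inverse (1 / ell_delta k (jam k u))) (at u)"
    by (rule DERIV_inverse_function[where f="ellF k" and a="u - 1" and b="u + 1"])
       (use has_real_derivative_ellF[OF k] ell_delta_pos[OF k, of "jam k u"] ellF_jam[OF k]
            isCont_jam[OF k] in auto)
  thus ?thesis by simp
qed

lemma jam_in_half_period_iff:
  assumes k: "k\<^sup>2 < 1"
  shows "l \<in> {-2 * ellK k<..<0} \<longleftrightarrow> jam k l \<in> {-pi<..<0}"
  using ellF_less_iff[OF k, of "-pi" "jam k l"] ellF_less_iff[OF k, of "jam k l" 0]
  by (simp add: ellF_jam[OF k] ellF_minus_pi[OF k] ellF_0)

section \<open>The function \<open>p\<close> in the amplitude variable\<close>

text \<open>\<open>p\<close> as a function of the amplitude; \<open>r\<close> and \<open>q\<close> stand for \<open>\<rho>\<close> and \<open>\<kappa>\<close>.\<close>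

definition p_amp :: "real \<Rightarrow> real \<Rightarrow> real \<Rightarrow> real \<Rightarrow> real" where
  "p_amp k r q \<phi> = q * (r * cos \<phi> / sin \<phi>) - 2 * (r / sin \<phi>) * (r * ell_delta k \<phi> / sin \<phi>)"

definition p_amp_num :: "real \<Rightarrow> real \<Rightarrow> real \<Rightarrow> real \<Rightarrow> real" where
  "p_amp_num k r q \<phi> = 2 * r\<^sup>2 * cos \<phi> * (2 - k\<^sup>2 * (sin \<phi>)\<^sup>2) - q * r * ell_delta k \<phi> * sin \<phi>"

definition p_amp_level :: "real \<Rightarrow> real \<Rightarrow> real \<Rightarrow> real" where
  "p_amp_level k q \<phi> = q * ell_delta k \<phi> * sin \<phi> / (cos \<phi> * (2 - k\<^sup>2 * (sin \<phi>)\<^sup>2))"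

lemma sin_neg: "-pi < \<phi> \<Longrightarrow> \<phi> < 0 \<Longrightarrow> sin \<phi> < 0"
  using sin_gt_zero[of "-\<phi>"] by simp

lemma cos_neg: "-pi < \<phi> \<Longrightarrow> \<phi> < -(pi/2) \<Longrightarrow> cos \<phi> < 0"
  using cos_gt_zero[of "\<phi> + pi"] by simp

lemma has_real_derivative_p_amp:
  assumes "k\<^sup>2 < 1" "sin \<phi> \<noteq> 0"
  shows "(p_amp k r q has_real_derivative p_amp_num k r q \<phi> / ((sin \<phi>)^3 * ell_delta k \<phi>)) (at \<phi>)"
  unfolding p_amp_def[abs_def]
  apply (rule derivative_eq_intros refl assms | simp add: assms)+
  using ell_delta_pos[OF assms(1), of \<phi>] ell_delta_squared[OF assms(1), of \<phi>] assms(2)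
  apply (simp add: field_simps p_amp_num_def)
  using sin_cos_squared_add[of \<phi>] ell_delta_squared[OF assms(1), of \<phi>]
  by algebra

lemma p_amp_num_pos:
  assumes "k\<^sup>2 < 1" "r > 0" "q > 0" "sin \<phi> < 0" "cos \<phi> \<ge> 0"
  shows "p_amp_num k r q \<phi> > 0"
proof -
  have "2 * r\<^sup>2 * cos \<phi> * (2 - k\<^sup>2 * (sin \<phi>)\<^sup>2) \<ge> 0"
    using ell_delta_radicand_pos[OF assms(1), of \<phi>] assms by simp
  moreover have "q * r * ell_delta k \<phi> * sin \<phi> < 0"
    using assms ell_delta_pos[OF assms(1), of \<phi>] by (simp add: mult_pos_neg)
  ultimately show ?thesis unfolding p_amp_num_def by linarith
qed

lemma p_amp_num_eq_level:
  assumes "k\<^sup>2 < 1" "cos \<phi> \<noteq> 0"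
  shows "p_amp_num k r q \<phi> = r * cos \<phi> * (2 - k\<^sup>2 * (sin \<phi>)\<^sup>2) * (2 * r - p_amp_level k q \<phi>)"
  using ell_delta_radicand_pos[OF assms(1), of \<phi>] assms(2)
  unfolding p_amp_num_def p_amp_level_def by (simp add: field_simps power2_eq_square)

lemma has_real_derivative_p_amp_level:
  assumes k: "k\<^sup>2 < 1" and "cos \<phi> \<noteq> 0"
  shows "(p_amp_level k q has_real_derivative
     q * ((1 - k\<^sup>2 * (sin \<phi>)\<^sup>2) * (2 - k\<^sup>2 * (sin \<phi>)\<^sup>2) - (k\<^sup>2 * (sin \<phi>)\<^sup>2)\<^sup>2 * (cos \<phi>)\<^sup>2)
      / ((cos \<phi>)\<^sup>2 * (2 - k\<^sup>2 * (sin \<phi>)\<^sup>2)\<^sup>2 * ell_delta k \<phi>)) (at \<phi>)"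
proof -
  define s c D w where "s = sin \<phi>" "c = cos \<phi>" "D = ell_delta k \<phi>" "w = 2 - k\<^sup>2 * s\<^sup>2"
  have D: "D > 0" "D\<^sup>2 = 1 - k\<^sup>2 * s\<^sup>2"
    unfolding s_c_D_w_def using ell_delta_pos[OF k] ell_delta_squared[OF k] by auto
  have w: "w \<noteq> 0" unfolding s_c_D_w_def using ell_delta_radicand_pos[OF k, of \<phi>] by simp
  have sc: "s\<^sup>2 + c\<^sup>2 = 1" unfolding s_c_D_w_def by simp
  have "(p_amp_level k q has_real_derivative
     ((c * (q * D) - k\<^sup>2 * s * c * q * s / D) * (c * w) - q * D * s * (- (s * w) - 2 * (c * s) * k\<^sup>2 * c))
     / (c * w * (c * w))) (at \<phi>)"
    unfolding p_amp_level_def[abs_def] s_c_D_w_def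
    by (rule derivative_eq_intros refl k | use assms w[unfolded s_c_D_w_def] in simp)+
  moreover have "((c * (q * D) - k\<^sup>2 * s * c * q * s / D) * (c * w)
      - q * D * s * (- (s * w) - 2 * (c * s) * k\<^sup>2 * c)) / (c * w * (c * w))
    = q * ((1 - k\<^sup>2 * s\<^sup>2) * w - (k\<^sup>2 * s\<^sup>2)\<^sup>2 * c\<^sup>2) / (c\<^sup>2 * w\<^sup>2 * D)"
    using D(1) assms(2) w apply (simp add: field_simps s_c_D_w_def[symmetric])
    using D(2) sc unfolding s_c_D_w_def(4) by algebra
  ultimately show ?thesis unfolding s_c_D_w_def by simp
qed

lemma p_amp_level_has_pos_derivative:
  assumes k: "k\<^sup>2 < 1" and "cos \<phi> \<noteq> 0" "q > 0"
  shows "\<exists>G'. (p_amp_level k q has_real_derivative G') (at \<phi>) \<and> G' > 0"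
proof -
  define u where "u = k\<^sup>2 * (sin \<phi>)\<^sup>2"
  have u: "0 \<le> u" "u < 1" "u \<le> (sin \<phi>)\<^sup>2"
    unfolding u_def using ell_delta_radicand_pos[OF k, of \<phi>] k
    by (auto intro: mult_left_le_one_le)
  hence "(cos \<phi>)\<^sup>2 \<le> 1 - u" using sin_cos_squared_add[of \<phi>] by linarith
  moreover have "u\<^sup>2 \<le> 1" using u by (simp add: power_le_one)
  ultimately have "u\<^sup>2 * (cos \<phi>)\<^sup>2 \<le> 1 - u"
    using u mult_mono[of "u\<^sup>2" 1 "(cos \<phi>)\<^sup>2" "1 - u"] by simp
  moreover have "(1 - u) * (2 - u) - (1 - u) = (1 - u)\<^sup>2" by algebra
  moreover have "(1 - u)\<^sup>2 > 0" using u by simp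
  ultimately have "(1 - u) * (2 - u) - u\<^sup>2 * (cos \<phi>)\<^sup>2 > 0" by linarith
  moreover have "(cos \<phi>)\<^sup>2 * (2 - u)\<^sup>2 * ell_delta k \<phi> > 0"
    using assms(2) u ell_delta_pos[OF k, of \<phi>] by simp
  ultimately show ?thesis
    using has_real_derivative_p_amp_level[OF k assms(2), of q] \<open>q > 0\<close>
    unfolding u_def[symmetric] by (blast intro: divide_pos_pos mult_pos_pos)
qed

lemma p_amp_level_strict_mono:
  assumes k: "k\<^sup>2 < 1" and "q > 0" "-pi < a" "a < b" "b < -(pi/2)"
  shows "p_amp_level k q a < p_amp_level k q b"
proof (rule DERIV_pos_imp_increasing[OF \<open>a < b\<close>])
  fix \<phi> assume "a \<le> \<phi>" "\<phi> \<le> b"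
  hence "cos \<phi> \<noteq> 0" using cos_neg[of \<phi>] assms by simp
  thus "\<exists>y. DERIV (p_amp_level k q) \<phi> :> y \<and> y > 0"
    using p_amp_level_has_pos_derivative[OF k _ \<open>q > 0\<close>] by blast
qed

lemma p_amp_num_unique_zero:
  assumes k: "k\<^sup>2 < 1" and r: "r > 0" and q: "q > 0"
  shows "\<exists>\<phi>\<^sub>0 \<in> {-pi<..<-(pi/2)}. {\<phi> \<in> {-pi<..<0}. p_amp_num k r q \<phi> = 0} = {\<phi>\<^sub>0}"
proof -
  have zero_left: "\<phi> < -(pi/2)" and level: "p_amp_level k q \<phi> = 2 * r"
    if \<phi>: "-pi < \<phi>" "\<phi> < 0" "p_amp_num k r q \<phi> = 0" for \<phi>
  proof -
    show "\<phi> < -(pi/2)"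
    proof (rule ccontr)
      assume "\<not> \<phi> < -(pi/2)"
      hence "cos \<phi> \<ge> 0" using cos_ge_zero \<phi> by simp
      thus False using p_amp_num_pos[OF k r q sin_neg[OF \<phi>(1,2)]] \<phi>(3) by simp
    qed
    hence "cos \<phi> < 0" using cos_neg \<phi> by simp
    moreover have "2 - k\<^sup>2 * (sin \<phi>)\<^sup>2 > 0" using ell_delta_radicand_pos[OF k, of \<phi>] by simp
    ultimately show "p_amp_level k q \<phi> = 2 * r"
      using p_amp_num_eq_level[OF k, of \<phi> r q] \<phi>(3) r by simp
  qed
  have left: "p_amp_num k r q (-pi) < 0" and right: "p_amp_num k r q (-(pi/2)) > 0"
    unfolding p_amp_num_def using r q ell_delta_pos[OF k, of "-(pi/2)"] by simp_all
  moreover have "isCont (p_amp_num k r q) \<phi>" for \<phi>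
    unfolding p_amp_num_def[abs_def] by (intro continuous_intros isCont_ell_delta k)
  ultimately obtain \<phi>\<^sub>0 where "-pi \<le> \<phi>\<^sub>0" "\<phi>\<^sub>0 \<le> -(pi/2)" "p_amp_num k r q \<phi>\<^sub>0 = 0"
    using IVT[of "p_amp_num k r q" "-pi" 0 "-(pi/2)"] by force
  hence \<phi>\<^sub>0: "-pi < \<phi>\<^sub>0" "\<phi>\<^sub>0 < -(pi/2)" "p_amp_num k r q \<phi>\<^sub>0 = 0"
    using left right by (auto simp: order_le_less)
  have "\<phi>\<^sub>0 < 0" using \<phi>\<^sub>0(2) pi_gt_zero by linarith
  hence level\<^sub>0: "p_amp_level k q \<phi>\<^sub>0 = 2 * r"
    using level \<phi>\<^sub>0 by blast
  have unique: "\<phi> = \<phi>\<^sub>0" if \<phi>: "-pi < \<phi>" "\<phi> < 0" "p_amp_num k r q \<phi> = 0" for \<phi>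
  proof (rule ccontr)
    assume "\<phi> \<noteq> \<phi>\<^sub>0"
    hence "p_amp_level k q \<phi> \<noteq> p_amp_level k q \<phi>\<^sub>0"
      using p_amp_level_strict_mono[OF k q] zero_left[OF \<phi>] \<phi>(1) \<phi>\<^sub>0(1,2)
      by (metis less_irrefl neq_iff)
    thus False using level[OF \<phi>] level\<^sub>0 by simp
  qed
  have zeros: "{\<phi> \<in> {-pi<..<0}. p_amp_num k r q \<phi> = 0} = {\<phi>\<^sub>0}"
  proof (intro equalityI subsetI)
    fix \<phi> assume "\<phi> \<in> {\<phi> \<in> {-pi<..<0}. p_amp_num k r q \<phi> = 0}"
    thus "\<phi> \<in> {\<phi>\<^sub>0}" using unique[of \<phi>] by auto
  qed (use \<phi>\<^sub>0(1,3) \<open>\<phi>\<^sub>0 < 0\<close> in simp)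
  show ?thesis
    by (rule bexI[of _ \<phi>\<^sub>0]) (use zeros \<phi>\<^sub>0(1,2) in simp_all)
qed

text \<open>At a zero the factor \<open>2r - G\<close> of \<open>B = p_amp_num\<close> vanishes, so only its derivative
  \<open>-G' < 0\<close> survives the product rule, multiplied by the negative cofactor.\<close>

lemma p_amp_num_has_pos_derivative_at_zero:
  assumes k: "k\<^sup>2 < 1" and r: "r > 0" and q: "q > 0"
    and \<phi>\<^sub>0: "-pi < \<phi>\<^sub>0" "\<phi>\<^sub>0 < -(pi/2)" "p_amp_num k r q \<phi>\<^sub>0 = 0"
  shows "\<exists>B'. (p_amp_num k r q has_real_derivative B') (at \<phi>\<^sub>0) \<and> B' > 0"
proof -
  define H where "H = (\<lambda>\<phi>. r * cos \<phi> * (2 - k\<^sup>2 * (sin \<phi>)\<^sup>2))"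
  have c0: "cos \<phi>\<^sub>0 < 0" using cos_neg \<phi>\<^sub>0 by simp
  have w0: "2 - k\<^sup>2 * (sin \<phi>\<^sub>0)\<^sup>2 > 0" using ell_delta_radicand_pos[OF k, of \<phi>\<^sub>0] by simp
  hence H0: "H \<phi>\<^sub>0 < 0"
    unfolding H_def using c0 r by (simp add: mult_pos_neg mult_neg_pos)
  have level: "p_amp_level k q \<phi>\<^sub>0 = 2 * r"
    using p_amp_num_eq_level[OF k, of \<phi>\<^sub>0 r q] \<phi>\<^sub>0(3) w0 c0 r by simp
  obtain G' where dG: "(p_amp_level k q has_real_derivative G') (at \<phi>\<^sub>0)" and "G' > 0"
    using p_amp_level_has_pos_derivative[OF k _ q, of \<phi>\<^sub>0] c0 by auto
  have "(H has_real_derivative r * (- sin \<phi>\<^sub>0) * (2 - k\<^sup>2 * (sin \<phi>\<^sub>0)\<^sup>2)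
      + r * cos \<phi>\<^sub>0 * (- (k\<^sup>2 * (2 * sin \<phi>\<^sub>0 * cos \<phi>\<^sub>0)))) (at \<phi>\<^sub>0)"
    unfolding H_def by (auto intro!: derivative_eq_intros simp: algebra_simps power2_eq_square)
  then obtain H' where dH: "(H has_real_derivative H') (at \<phi>\<^sub>0)" ..
  have "((\<lambda>\<phi>. H \<phi> * (2 * r - p_amp_level k q \<phi>)) has_real_derivative - (H \<phi>\<^sub>0 * G')) (at \<phi>\<^sub>0)"
    using DERIV_mult[OF dH DERIV_diff[OF DERIV_const[of "2 * r"] dG]] level by (simp add: mult.commute)
  hence "(p_amp_num k r q has_real_derivative - (H \<phi>\<^sub>0 * G')) (at \<phi>\<^sub>0)"
    by (rule has_field_derivative_transform_within_open[where S="{-pi<..<-(pi/2)}"])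
       (use \<phi>\<^sub>0 cos_neg[THEN less_imp_neq] p_amp_num_eq_level[OF k] in \<open>auto simp: H_def\<close>)
  moreover have "- (H \<phi>\<^sub>0 * G') > 0" using H0 \<open>G' > 0\<close> by (simp add: mult_neg_pos)
  ultimately show ?thesis by blast
qed

lemma has_real_derivative_divide_at_zero:
  fixes f g :: "real \<Rightarrow> real"
  assumes "(f has_real_derivative f') (at x)" "(g has_real_derivative g') (at x)"
    and "f x = 0" "g x \<noteq> 0"
  shows "((\<lambda>x. f x / g x) has_real_derivative f' / g x) (at x)"
  using DERIV_divide[OF assms(1,2,4)] assms(3,4) by (simp add: power2_eq_square)

section \<open>Back to the variable \<open>\<lambda>\<close>\<close>

lemma has_real_derivative_p_amp_jam:
  assumes k: "k\<^sup>2 < 1" and "jam k l \<in> {-pi<..<0}"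
  shows "((\<lambda>l. p_amp k r q (jam k l)) has_real_derivative
           p_amp_num k r q (jam k l) / (sin (jam k l))^3) (at l)"
proof -
  have "sin (jam k l) \<noteq> 0" using sin_neg assms(2) by fastforce
  from DERIV_chain2[OF has_real_derivative_p_amp[OF k this] has_real_derivative_jam[OF k]]
  show ?thesis using ell_delta_pos[OF k, of "jam k l"] by simp
qed

lemma p_amp_jam_unique_critical_point:
  assumes k: "k\<^sup>2 < 1" and r: "r > 0" and q: "q > 0"
  defines "S \<equiv> {-2 * ellK k<..<0}" and "p \<equiv> \<lambda>l. p_amp k r q (jam k l)"
  shows "\<exists>l\<^sub>0. l\<^sub>0 \<in> S \<and> deriv p l\<^sub>0 = 0 \<and> (\<forall>l\<in>S. deriv p l = 0 \<longrightarrow> l = l\<^sub>0)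
      \<and> deriv (deriv p) l\<^sub>0 < 0"
proof -
  have jam_S: "l \<in> S \<longleftrightarrow> jam k l \<in> {-pi<..<0}" for l
    unfolding S_def by (rule jam_in_half_period_iff[OF k])
  have deriv_p: "deriv p l = p_amp_num k r q (jam k l) / (sin (jam k l))^3" if "l \<in> S" for l
    unfolding p_def using has_real_derivative_p_amp_jam[OF k] that jam_S by (blast intro: DERIV_imp_deriv)
  obtain \<phi>\<^sub>0 where \<phi>\<^sub>0: "-pi < \<phi>\<^sub>0" "\<phi>\<^sub>0 < -(pi/2)"
    and zeros: "{\<phi> \<in> {-pi<..<0}. p_amp_num k r q \<phi> = 0} = {\<phi>\<^sub>0}"
    using p_amp_num_unique_zero[OF k r q] by auto
  define l\<^sub>0 where "l\<^sub>0 = ellF k \<phi>\<^sub>0"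
  have jam_l\<^sub>0: "jam k l\<^sub>0 = \<phi>\<^sub>0" unfolding l\<^sub>0_def by (rule jam_ellF[OF k])
  have "l\<^sub>0 \<in> S" using jam_S \<phi>\<^sub>0 jam_l\<^sub>0 by simp
  have critical_iff: "deriv p l = 0 \<longleftrightarrow> l = l\<^sub>0" if "l \<in> S" for l
  proof -
    have "sin (jam k l) \<noteq> 0" using sin_neg that jam_S by fastforce
    hence "deriv p l = 0 \<longleftrightarrow> jam k l = \<phi>\<^sub>0" using deriv_p[OF that] zeros that jam_S by auto
    thus ?thesis using ellF_jam[OF k, of l] jam_l\<^sub>0 l\<^sub>0_def by auto
  qed
  obtain B' where dB: "(p_amp_num k r q has_real_derivative B') (at \<phi>\<^sub>0)" and "B' > 0"
    using p_amp_num_has_pos_derivative_at_zero[OF k r q \<phi>\<^sub>0] zeros by blast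
  have "sin \<phi>\<^sub>0 < 0" using sin_neg \<phi>\<^sub>0 by simp
  have "((\<lambda>\<phi>. p_amp_num k r q \<phi> / (sin \<phi>)^3) has_real_derivative B' / (sin \<phi>\<^sub>0)^3) (at \<phi>\<^sub>0)"
    using zeros \<open>sin \<phi>\<^sub>0 < 0\<close>
    by (intro has_real_derivative_divide_at_zero[OF dB]) (auto intro!: derivative_eq_intros)
  from DERIV_chain2[OF this[folded jam_l\<^sub>0] has_real_derivative_jam[OF k]]
  have "(deriv p has_real_derivative B' / (sin \<phi>\<^sub>0)^3 * ell_delta k \<phi>\<^sub>0) (at l\<^sub>0)"
    unfolding jam_l\<^sub>0
    by (rule has_field_derivative_transform_within_open[where S=S])
       (use \<open>l\<^sub>0 \<in> S\<close> deriv_p in \<open>auto simp: S_def\<close>)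
  moreover have "B' / (sin \<phi>\<^sub>0)^3 * ell_delta k \<phi>\<^sub>0 < 0"
    using \<open>B' > 0\<close> \<open>sin \<phi>\<^sub>0 < 0\<close> ell_delta_pos[OF k, of \<phi>\<^sub>0]
    by (simp add: divide_pos_neg mult_neg_pos)
  ultimately show ?thesis
    using \<open>l\<^sub>0 \<in> S\<close> critical_iff DERIV_imp_deriv by metis
qed

theorem mainTheorem11:
  fixes J1 J2 J3 \<kappa> :: real
  assumes "J1 < J2" and "J2 < J3" and "\<kappa> > 0"
  defines "K \<equiv> ellK (modk J1 J2 J3)"
  shows "\<exists>l0. l0 \<in> {-2*K<..<0}
           \<and> deriv (\<lambda>l. pfun J1 J2 J3 l \<kappa>) l0 = 0
           \<and> (\<forall>l\<in>{-2*K<..<0}. deriv (\<lambda>l. pfun J1 J2 J3 l \<kappa>) l = 0 \<longrightarrow> l = l0)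
           \<and> deriv (deriv (\<lambda>l. pfun J1 J2 J3 l \<kappa>)) l0 < 0"
proof -
  define k r where "k = modk J1 J2 J3" and "r = rho J1 J2 J3"
  have "k\<^sup>2 < 1" unfolding k_def modk_def using assms(1,2) by (simp add: divide_less_eq)
  moreover have "r > 0" unfolding r_def rho_def using assms(1,2) by simp
  moreover have "(\<lambda>l. pfun J1 J2 J3 l \<kappa>) = (\<lambda>l. p_amp k r \<kappa> (jam k l))"
    unfolding pfun_def w1_def w2_def w3_def jsn_def jcn_def jdn_def p_amp_def ell_delta_def k_def r_def
    by simp
  ultimately show ?thesis
    using p_amp_jam_unique_critical_point[OF _ _ \<open>\<kappa> > 0\<close>] unfolding K_def k_def by simp
qed

end
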